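(* Let $l\ge1$, $n\in\mathbb N$ and $\Delta t>0$ with $\Delta t\,c_n<2$. Then for every initial condition $\rho_0\in B(\mathcal H_n)$ there exists $\rho_\infty\in B(\mathcal H_n)$ with $P_{\{l\}}\rho_\infty P_{\{l\}}=\rho_\infty$ such that $(\mathcal E_1^{\Delta t,n})^p(\rho_0)\to\rho_\infty$ as $p\to\infty$ at a geometric rate, where $P_{\{l\}}$ is the orthogonal projector onto $\mathrm{span}\{|k\rangle:0\le k\le l-1\}$.
   Context: Work in $\mathcal H=\ell^2(\mathbb N)$ with Fock basis $(|k\rangle)_{k\in\mathbb N}$ and annihilation operator $a|k+1\rangle=\sqrt{k+1}|k\rangle$, $a|0\rangle=0$. Fix $l\ge1$. For $n\in\mathbb N$, $\mathcal H_n=\mathrm{span}\{|k\rangle:0\le k\le n\}$ with orthogonal projector $P_n$, and $a^l_n=P_na^lP_n$. Set $c_k=\prod_{j=0}^{l-1}(k-j)$, so that $a^{l\dagger}_na^l_n|k\rangle=c_k|k\rangle$ for $0\le k\le n$. The first-order explicit Euler scheme for the Galerkin-truncated $l$-photon loss equation is $\mathcal E_1^{\Delta t,n}(\rho)=\rho+\Delta t\big(a^l_n\rho a^{l\dagger}_n-\tfrac12(a^{l\dagger}_na^l_n\rho+\rho a^{l\dagger}_na^l_n)\big)$ for $\rho\in B(\mathcal H_n)$. *)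

theory Defs
  imports "Jordan_Normal_Form.Matrix"
begin

text \<open>Operators on H_n = span{|0>,...,|n>} are (n+1)x(n+1) complex matrices in the Fock basis.\<close>

definition c_coef :: "nat \<Rightarrow> nat \<Rightarrow> real" where
  "c_coef l k = (\<Prod>j<l. (real k - real j))"

definition dag :: "complex mat \<Rightarrow> complex mat" where
  "dag A = mat (dim_col A) (dim_row A) (\<lambda>(i,j). cnj (A $$ (j,i)))"

text \<open>a^l_n = P_n a^l P_n : <i| a^l |j> = sqrt(j (j-1) ... (j-l+1)) if i = j - l, else 0.\<close>
definition al_n :: "nat \<Rightarrow> nat \<Rightarrow> complex mat" where
  "al_n l n = mat (n+1) (n+1)
     (\<lambda>(i,j). if j = i + l then complex_of_real (sqrt (\<Prod>m<l. real (j - m))) else 0)"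

text \<open>First-order explicit Euler scheme for the truncated l-photon loss equation.\<close>
definition euler1 :: "nat \<Rightarrow> nat \<Rightarrow> real \<Rightarrow> complex mat \<Rightarrow> complex mat" where
  "euler1 l n dt \<rho> =
     (let A = al_n l n in
      \<rho> + complex_of_real dt \<cdot>\<^sub>m
        (A * \<rho> * dag A - (1/2 :: complex) \<cdot>\<^sub>m (dag A * A * \<rho> + \<rho> * (dag A * A))))"

definition P_low :: "nat \<Rightarrow> nat \<Rightarrow> complex mat" where
  "P_low l n = mat (n+1) (n+1) (\<lambda>(i,j). if i = j \<and> i < l then 1 else 0)"

end

theory Submission
  imports Defs
begin

text \<open>In the Fock basis the Euler step acts entrywise: the entry (i,j) is multiplied by
  1 - dt (c_i + c_j)/2 and receives a multiple of the entry (i+l,j+l). Outside the l x l block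
  of low indices c_i + c_j >= 1, so under dt c_n < 2 these multipliers have modulus below 1
  and, by downward induction on i, those entries decay geometrically. Inside the block the
  multiplier is 1, so these entries are partial sums of geometrically decaying increments
  and converge geometrically; the limit is therefore supported on the low block.\<close>

definition converges_geometrically :: "real \<Rightarrow> (nat \<Rightarrow> 'a::real_normed_vector) \<Rightarrow> 'a \<Rightarrow> bool" where
  "converges_geometrically r x L \<longleftrightarrow> (\<exists>D. \<forall>p. norm (x p - L) \<le> D * r ^ p)"

lemma converges_geometrically_const_mult:
  fixes x :: "nat \<Rightarrow> 'a::real_normed_algebra"
  assumes "converges_geometrically r x 0"
  shows "converges_geometrically r (\<lambda>p. c * x p) 0"
proof -
  obtain D where D: "\<And>p. norm (x p) \<le> D * r ^ p"
    using assms unfolding converges_geometrically_def by auto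
  have "norm (c * x p) \<le> (norm c * D) * r ^ p" for p
    using norm_mult_ineq[of c "x p"] mult_left_mono[OF D, of "norm c" p]
    by (simp add: mult.assoc)
  then show ?thesis unfolding converges_geometrically_def by auto
qed

lemma converges_geometrically_linear_recurrence:
  fixes x y :: "nat \<Rightarrow> 'a::real_normed_algebra"
  assumes rec: "\<And>p. x (Suc p) = a * x p + y p"
    and a: "norm a \<le> s" and "0 \<le> s" "s < r"
    and y: "converges_geometrically r y 0"
  shows "converges_geometrically r x 0"
proof -
  obtain C where C: "\<And>p. norm (y p) \<le> C * r ^ p"
    using y unfolding converges_geometrically_def by auto
  define D where "D = max (norm (x 0)) (C / (r - s))"
  have "C / (r - s) \<le> D" by (simp add: D_def)
  then have CD: "C \<le> (r - s) * D"
    using \<open>s < r\<close> by (simp add: divide_le_eq mult.commute)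
  have "norm (x p) \<le> D * r ^ p" for p
  proof (induction p)
    case 0
    show ?case by (simp add: D_def)
  next
    case (Suc p)
    have "norm (x (Suc p)) \<le> norm a * norm (x p) + norm (y p)"
      unfolding rec by (metis norm_mult_ineq norm_triangle_ineq add_right_mono order_trans)
    also have "\<dots> \<le> s * (D * r ^ p) + C * r ^ p"
      by (intro add_mono mult_mono a Suc C) (use \<open>0 \<le> s\<close> in auto)
    also have "\<dots> = (s * D + C) * r ^ p" by (simp add: algebra_simps)
    also have "\<dots> \<le> (s * D + (r - s) * D) * r ^ p"
      using CD \<open>0 \<le> s\<close> \<open>s < r\<close> by (intro mult_right_mono) auto
    also have "\<dots> = D * r ^ Suc p" by (simp add: algebra_simps)
    finally show ?case .
  qed
  then show ?thesis unfolding converges_geometrically_def by auto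
qed

lemma converges_geometrically_of_increments:
  fixes x y :: "nat \<Rightarrow> 'a::banach"
  assumes rec: "\<And>p. x (Suc p) = x p + y p" and "0 \<le> r" "r < 1"
    and y: "converges_geometrically r y 0"
  shows "\<exists>L. converges_geometrically r x L"
proof -
  obtain C where C: "\<And>p. norm (y p) \<le> C * r ^ p"
    using y unfolding converges_geometrically_def by auto
  have geom: "summable (\<lambda>p. C * r ^ p)"
    using assms by (simp add: summable_geometric)
  have "summable y"
    by (rule summable_comparison_test[OF _ geom]) (use C in auto)
  have x_eq: "x p = x 0 + (\<Sum>q<p. y q)" for p
    by (induction p) (simp_all add: rec)
  have "norm (x p - (x 0 + suminf y)) \<le> C / (1 - r) * r ^ p" for p
  proof -
    have "norm (x p - (x 0 + suminf y)) = norm (\<Sum>q. y (q + p))"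
      using suminf_split_initial_segment[OF \<open>summable y\<close>, of p] by (simp add: x_eq[of p])
    also have "\<dots> \<le> (\<Sum>q. C * r ^ p * r ^ q)"
    proof (rule norm_suminf_le)
      show "norm (y (q + p)) \<le> C * r ^ p * r ^ q" for q
        using C[of "q + p"] by (simp add: power_add mult_ac)
      show "summable (\<lambda>q. C * r ^ p * r ^ q)"
        using assms by (intro summable_mult summable_geometric) simp
    qed
    also have "\<dots> = C * r ^ p * (1 / (1 - r))"
      using assms by (simp add: suminf_mult suminf_geometric)
    also have "\<dots> = C / (1 - r) * r ^ p" by simp
    finally show ?thesis .
  qed
  then show ?thesis unfolding converges_geometrically_def by blast
qed

lemma converges_geometrically_uniform:
  assumes "finite S" "0 \<le> r" and conv: "\<And>q. q \<in> S \<Longrightarrow> converges_geometrically r (x q) (L q)"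
  shows "\<exists>C. \<forall>q\<in>S. \<forall>p. norm (x q p - L q) \<le> C * r ^ p"
proof -
  obtain D where D: "\<And>q p. q \<in> S \<Longrightarrow> norm (x q p - L q) \<le> D q * r ^ p"
    using conv unfolding converges_geometrically_def by metis
  have "norm (x q p - L q) \<le> (\<Sum>q\<in>S. max 0 (D q)) * r ^ p" if "q \<in> S" for q p
  proof -
    have "D q \<le> (\<Sum>q\<in>S. max 0 (D q))"
      using member_le_sum[OF that, of "\<lambda>q. max 0 (D q)"] \<open>finite S\<close> by simp
    then show ?thesis
      using D[OF that, of p] mult_right_mono[of "D q" _ "r ^ p"] \<open>0 \<le> r\<close> by force
  qed
  then show ?thesis by blast
qed

lemma c_coef_eq_0: "k < l \<Longrightarrow> c_coef l k = 0"
  unfolding c_coef_def by (rule prod_zero) auto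

lemma c_coef_ge_1: "l \<le> k \<Longrightarrow> 1 \<le> c_coef l k"
  unfolding c_coef_def by (rule prod_ge_1) auto

lemma c_coef_nonneg: "0 \<le> c_coef l k"
  using c_coef_eq_0[of k l] c_coef_ge_1[of l k] by (cases "l \<le> k") auto

lemma c_coef_mono:
  assumes "k \<le> m" shows "c_coef l k \<le> c_coef l m"
proof (cases "l \<le> k")
  case True
  then show ?thesis unfolding c_coef_def using assms by (intro prod_mono) auto
qed (simp add: c_coef_eq_0 c_coef_nonneg)

lemma c_coef_eq_prod_diff: "l \<le> k \<Longrightarrow> c_coef l k = (\<Prod>j<l. real (k - j))"
  unfolding c_coef_def by (rule prod.cong) auto

lemma index_mult_diagonal_mat_left:
  assumes "diagonal_mat D" "D \<in> carrier_mat m m" "dim_row A = m" "i < m" "j < dim_col A"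
  shows "(D * A) $$ (i,j) = D $$ (i,i) * A $$ (i,j)"
proof -
  have "(D * A) $$ (i,j) = (\<Sum>k\<in>{0..<m}. D $$ (i,k) * A $$ (k,j))"
    using assms by (simp add: scalar_prod_def)
  also have "\<dots> = (\<Sum>k\<in>{0..<m}. if k = i then D $$ (i,i) * A $$ (i,j) else 0)"
    using assms(1,2,4) by (intro sum.cong) (auto simp: diagonal_mat_def)
  finally show ?thesis using assms(4) by simp
qed

lemma index_mult_diagonal_mat_right:
  assumes "diagonal_mat D" "D \<in> carrier_mat m m" "dim_col A = m" "i < dim_row A" "j < m"
  shows "(A * D) $$ (i,j) = A $$ (i,j) * D $$ (j,j)"
proof -
  have "(A * D) $$ (i,j) = (\<Sum>k\<in>{0..<m}. A $$ (i,k) * D $$ (k,j))"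
    using assms by (simp add: scalar_prod_def)
  also have "\<dots> = (\<Sum>k\<in>{0..<m}. if k = j then A $$ (i,j) * D $$ (j,j) else 0)"
    using assms(1,2,5) by (intro sum.cong) (auto simp: diagonal_mat_def)
  finally show ?thesis using assms(5) by simp
qed

lemma dag_dim [simp]: "dim_row (dag A) = dim_col A" "dim_col (dag A) = dim_row A"
  by (simp_all add: dag_def)

lemma index_dag [simp]: "i < dim_col A \<Longrightarrow> j < dim_row A \<Longrightarrow> dag A $$ (i,j) = cnj (A $$ (j,i))"
  by (simp add: dag_def)

lemma al_n_dim [simp]: "dim_row (al_n l n) = n+1" "dim_col (al_n l n) = n+1"
  by (simp_all add: al_n_def)

lemma index_al_n:
  "i < n+1 \<Longrightarrow> j < n+1 \<Longrightarrow>
     al_n l n $$ (i,j) = (if j = i + l then of_real (sqrt (c_coef l j)) else 0)"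
  by (simp add: al_n_def c_coef_eq_prod_diff)

lemma index_al_n_mult:
  assumes "dim_row A = n+1" "i < n+1" "j < dim_col A"
  shows "(al_n l n * A) $$ (i,j) =
    (if i + l < n+1 then of_real (sqrt (c_coef l (i+l))) * A $$ (i+l,j) else 0)"
proof -
  have "(al_n l n * A) $$ (i,j) = (\<Sum>k\<in>{0..<n+1}. al_n l n $$ (i,k) * A $$ (k,j))"
    using assms by (simp add: scalar_prod_def)
  also have "\<dots> = (\<Sum>k\<in>{0..<n+1}.
      if k = i + l then of_real (sqrt (c_coef l (i+l))) * A $$ (i+l,j) else 0)"
    using assms by (intro sum.cong) (auto simp: index_al_n)
  finally show ?thesis by simp
qed

lemma index_mult_dag_al_n:
  assumes "dim_col A = n+1" "i < dim_row A" "j < n+1"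
  shows "(A * dag (al_n l n)) $$ (i,j) =
    (if j + l < n+1 then A $$ (i,j+l) * of_real (sqrt (c_coef l (j+l))) else 0)"
proof -
  have "(A * dag (al_n l n)) $$ (i,j) = (\<Sum>k\<in>{0..<n+1}. A $$ (i,k) * dag (al_n l n) $$ (k,j))"
    using assms by (simp add: scalar_prod_def)
  also have "\<dots> = (\<Sum>k\<in>{0..<n+1}.
      if k = j + l then A $$ (i,j+l) * of_real (sqrt (c_coef l (j+l))) else 0)"
    using assms by (intro sum.cong) (auto simp: index_al_n)
  finally show ?thesis by simp
qed

lemma dag_al_n_mult_al_n:
  "dag (al_n l n) * al_n l n = mat (n+1) (n+1) (\<lambda>(i,j). if i = j then of_real (c_coef l i) else 0)"
proof (rule eq_matI)
  fix i j assume "i < dim_row (mat (n+1) (n+1) (\<lambda>(i,j). if i = j then of_real (c_coef l i) else 0 :: complex))"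
    "j < dim_col (mat (n+1) (n+1) (\<lambda>(i,j). if i = j then of_real (c_coef l i) else 0 :: complex))"
  then have ij: "i < n+1" "j < n+1" by auto
  have "(dag (al_n l n) * al_n l n) $$ (i,j) =
      (\<Sum>k\<in>{0..<n+1}. dag (al_n l n) $$ (i,k) * al_n l n $$ (k,j))"
    using ij by (simp add: scalar_prod_def)
  also have "\<dots> = (\<Sum>k\<in>{0..<n+1}.
      if k = i - l then (if l \<le> i \<and> i = j then of_real (c_coef l i) else 0) else 0)"
    using ij c_coef_nonneg[of l i]
    by (intro sum.cong) (auto simp: index_al_n simp flip: of_real_mult)
  also have "\<dots> = (if i = j then of_real (c_coef l i) else 0)"
    using ij c_coef_eq_0[of i l] by auto
  finally show "(dag (al_n l n) * al_n l n) $$ (i,j) =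
      mat (n+1) (n+1) (\<lambda>(i,j). if i = j then of_real (c_coef l i) else 0) $$ (i,j)"
    using ij by simp
qed auto

lemma euler1_carrier:
  assumes "\<rho> \<in> carrier_mat (n+1) (n+1)"
  shows "euler1 l n dt \<rho> \<in> carrier_mat (n+1) (n+1)"
  using assms unfolding euler1_def Let_def carrier_mat_def
  by (simp only: index_add_mat index_smult_mat index_minus_mat index_mult_mat(2,3) dag_dim
      al_n_dim mem_Collect_eq)

lemma index_euler1:
  assumes "\<rho> \<in> carrier_mat (n+1) (n+1)" "i < n+1" "j < n+1"
  shows "euler1 l n dt \<rho> $$ (i,j) =
    of_real (1 - dt * (c_coef l i + c_coef l j) / 2) * \<rho> $$ (i,j)
    + (if i + l < n+1 \<and> j + l < n+1
       then of_real (dt * sqrt (c_coef l (i+l)) * sqrt (c_coef l (j+l))) * \<rho> $$ (i+l,j+l)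
       else 0)"
proof -
  let ?A = "al_n l n"
  let ?N = "dag (al_n l n) * al_n l n"
  have N: "diagonal_mat ?N" "?N \<in> carrier_mat (n+1) (n+1)"
    "\<And>k. k < n+1 \<Longrightarrow> ?N $$ (k,k) = of_real (c_coef l k)"
    unfolding dag_al_n_mult_al_n by (auto simp: diagonal_mat_def)
  have jump: "(?A * \<rho> * dag ?A) $$ (i,j) =
    (if i + l < n+1 \<and> j + l < n+1
     then of_real (sqrt (c_coef l (i+l))) * \<rho> $$ (i+l,j+l) * of_real (sqrt (c_coef l (j+l)))
     else 0)"
  proof -
    have "(?A * \<rho> * dag ?A) $$ (i,j) =
        (if j + l < n+1 then (?A * \<rho>) $$ (i,j+l) * of_real (sqrt (c_coef l (j+l))) else 0)"
      by (rule index_mult_dag_al_n) (use assms in auto)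
    also have "\<dots> = (if i + l < n+1 \<and> j + l < n+1
     then of_real (sqrt (c_coef l (i+l))) * \<rho> $$ (i+l,j+l) * of_real (sqrt (c_coef l (j+l)))
     else 0)"
      using assms by (auto simp: index_al_n_mult simp del: index_mult_mat)
    finally show ?thesis .
  qed
  have "euler1 l n dt \<rho> $$ (i,j) = \<rho> $$ (i,j) + of_real dt * ((?A * \<rho> * dag ?A) $$ (i,j)
      - 1/2 * ((?N * \<rho>) $$ (i,j) + (\<rho> * ?N) $$ (i,j)))"
    using assms unfolding euler1_def Let_def
    by (simp only: index_add_mat index_smult_mat index_minus_mat index_mult_mat(2,3) dag_dim al_n_dim
        carrier_matD)
  also have "\<dots> = \<rho> $$ (i,j) + of_real dt * ((?A * \<rho> * dag ?A) $$ (i,j)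
      - 1/2 * (of_real (c_coef l i) * \<rho> $$ (i,j) + \<rho> $$ (i,j) * of_real (c_coef l j)))"
    using assms N(3) by (simp only: index_mult_diagonal_mat_left[OF N(1,2)]
        index_mult_diagonal_mat_right[OF N(1,2)] carrier_matD)
  also have "\<dots> = of_real (1 - dt * (c_coef l i + c_coef l j) / 2) * \<rho> $$ (i,j)
    + (if i + l < n+1 \<and> j + l < n+1
       then of_real (dt * sqrt (c_coef l (i+l)) * sqrt (c_coef l (j+l))) * \<rho> $$ (i+l,j+l)
       else 0)"
    unfolding jump by (auto simp: algebra_simps)
  finally show ?thesis .
qed

locale euler1_iteration =
  fixes l n :: nat and dt :: real and \<rho>0 :: "complex mat"
  assumes l_pos: "1 \<le> l" and dt_pos: "0 < dt" and dt_small: "dt * c_coef l n < 2"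
    and \<rho>0_carrier: "\<rho>0 \<in> carrier_mat (n+1) (n+1)"
begin

definition entry :: "nat \<Rightarrow> nat \<Rightarrow> nat \<Rightarrow> complex" where
  "entry i j p = (euler1 l n dt ^^ p) \<rho>0 $$ (i,j)"

definition damping :: "nat \<Rightarrow> nat \<Rightarrow> real" where
  "damping i j = 1 - dt * (c_coef l i + c_coef l j) / 2"

definition feed :: "nat \<Rightarrow> nat \<Rightarrow> nat \<Rightarrow> complex" where
  "feed i j p = (if i + l < n+1 \<and> j + l < n+1
     then of_real (dt * sqrt (c_coef l (i+l)) * sqrt (c_coef l (j+l))) * entry (i+l) (j+l) p
     else 0)"

text \<open>Outside the low block, 1 <= c_i + c_j <= 2 c_n, so the damping factor lies in
  [1 - dt c_n, 1 - dt/2].\<close>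
definition contraction :: real where
  "contraction = max 0 (max (1 - dt/2) (dt * c_coef l n - 1))"

text \<open>Strictly above the contraction factor s: the forcing by the shifted entries would
  otherwise only give bounds of order p s^p.\<close>
definition rate :: real where
  "rate = (1 + contraction) / 2"

lemma iterate_carrier: "(euler1 l n dt ^^ p) \<rho>0 \<in> carrier_mat (n+1) (n+1)"
proof (induction p)
  case 0
  show ?case using \<rho>0_carrier by simp
next
  case (Suc p)
  show ?case using euler1_carrier[OF Suc.IH] by simp
qed

lemma entry_Suc:
  assumes "i < n+1" "j < n+1"
  shows "entry i j (Suc p) = of_real (damping i j) * entry i j p + feed i j p"
  using index_euler1[OF iterate_carrier assms] by (simp add: entry_def damping_def feed_def)

lemma rate_bounds: "contraction < rate" "rate < 1" "0 \<le> rate"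
proof -
  have "0 \<le> contraction" "contraction < 1"
    using dt_pos dt_small by (auto simp: contraction_def)
  then show "contraction < rate" "rate < 1" "0 \<le> rate"
    by (auto simp: rate_def)
qed

lemma contraction_nonneg: "0 \<le> contraction"
  by (simp add: contraction_def)

lemma abs_damping_le_contraction:
  assumes "i < n+1" "j < n+1" "l \<le> i \<or> l \<le> j"
  shows "\<bar>damping i j\<bar> \<le> contraction"
proof -
  have "1 \<le> c_coef l i + c_coef l j"
    using assms(3) c_coef_ge_1 c_coef_nonneg by (metis add_increasing add_increasing2)
  then have "dt \<le> dt * (c_coef l i + c_coef l j)"
    using dt_pos by (simp add: mult_le_cancel_left1)
  moreover have "dt * (c_coef l i + c_coef l j) \<le> dt * (2 * c_coef l n)"
    using c_coef_mono[of i n l] c_coef_mono[of j n l] assms(1,2) dt_pos by simp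
  ultimately have "damping i j \<le> 1 - dt/2" "- damping i j \<le> dt * c_coef l n - 1"
    by (simp_all add: damping_def)
  then show ?thesis
    by (auto simp: contraction_def abs_le_iff)
qed

lemma feed_decays:
  assumes "i + l < n+1 \<Longrightarrow> j + l < n+1 \<Longrightarrow> converges_geometrically rate (entry (i+l) (j+l)) 0"
  shows "converges_geometrically rate (feed i j) 0"
proof (cases "i + l < n+1 \<and> j + l < n+1")
  case True
  then have "converges_geometrically rate (entry (i+l) (j+l)) 0"
    using assms by blast
  then show ?thesis
    using True converges_geometrically_const_mult[of rate "entry (i+l) (j+l)"]
    by (simp add: feed_def[abs_def])
next
  case False
  then have "feed i j = (\<lambda>p. 0)"
    by (auto simp: feed_def)
  then show ?thesis
    unfolding converges_geometrically_def by (intro exI[of _ 0]) simp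
qed

lemma entry_decays_outside_low_block:
  assumes "i < n+1" "j < n+1" "l \<le> i \<or> l \<le> j"
  shows "converges_geometrically rate (entry i j) 0"
  using assms
proof (induction "n - i" arbitrary: i j rule: less_induct)
  case less
  have "converges_geometrically rate (entry (i+l) (j+l)) 0" if "i + l < n+1" "j + l < n+1"
  proof (rule less.hyps)
    show "n - (i + l) < n - i"
      using that l_pos by linarith
  qed (use that in auto)
  then have feed: "converges_geometrically rate (feed i j) 0"
    by (rule feed_decays)
  show ?case
  proof (rule converges_geometrically_linear_recurrence)
    show "entry i j (Suc p) = of_real (damping i j) * entry i j p + feed i j p" for p
      using less.prems by (intro entry_Suc) auto
    show "norm (of_real (damping i j) :: complex) \<le> contraction"
      using abs_damping_le_contraction[OF less.prems] by simp
  qed (use feed rate_bounds contraction_nonneg in auto)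
qed

lemma entry_converges_in_low_block:
  assumes "i < l" "j < l" "i < n+1" "j < n+1"
  shows "\<exists>L. converges_geometrically rate (entry i j) L"
proof (rule converges_geometrically_of_increments)
  show "entry i j (Suc p) = entry i j p + feed i j p" for p
    using entry_Suc[OF assms(3,4)] assms(1,2) by (simp add: damping_def c_coef_eq_0)
  show "converges_geometrically rate (feed i j) 0"
    by (rule feed_decays, rule entry_decays_outside_low_block) auto
qed (use rate_bounds in auto)

definition limit :: "complex mat" where
  "limit = mat (n+1) (n+1) (\<lambda>(i,j).
     if i < l \<and> j < l then SOME L. converges_geometrically rate (entry i j) L else 0)"

lemma limit_carrier: "limit \<in> carrier_mat (n+1) (n+1)"
  by (simp add: limit_def)

lemma entry_converges_to_limit:
  assumes "i < n+1" "j < n+1"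
  shows "converges_geometrically rate (entry i j) (limit $$ (i,j))"
proof (cases "i < l \<and> j < l")
  case True
  then show ?thesis
    using someI_ex[OF entry_converges_in_low_block] assms by (simp add: limit_def)
next
  case False
  then have "limit $$ (i,j) = 0"
    using assms by (auto simp: limit_def)
  moreover have "l \<le> i \<or> l \<le> j"
    using False by auto
  ultimately show ?thesis
    using entry_decays_outside_low_block assms by simp
qed

lemma P_low_limit: "P_low l n * limit * P_low l n = limit"
proof (rule eq_matI)
  have P: "diagonal_mat (P_low l n)" "P_low l n \<in> carrier_mat (n+1) (n+1)"
    by (auto simp: P_low_def diagonal_mat_def)
  fix i j assume "i < dim_row limit" "j < dim_col limit"
  then have ij: "i < n+1" "j < n+1"
    using limit_carrier by auto
  have "(P_low l n * limit * P_low l n) $$ (i,j) = (P_low l n * limit) $$ (i,j) * P_low l n $$ (j,j)"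
    by (rule index_mult_diagonal_mat_right[OF P]) (use ij limit_carrier in \<open>auto simp: P_low_def\<close>)
  also have "(P_low l n * limit) $$ (i,j) = P_low l n $$ (i,i) * limit $$ (i,j)"
    by (rule index_mult_diagonal_mat_left[OF P]) (use ij limit_carrier in auto)
  finally show "(P_low l n * limit * P_low l n) $$ (i,j) = limit $$ (i,j)"
    using ij by (simp add: P_low_def limit_def)
qed (use limit_carrier in \<open>auto simp: P_low_def\<close>)

end

theorem mainTheorem11:
  fixes l n :: nat and dt :: real and \<rho>0 :: "complex mat"
  assumes "l \<ge> 1" and "dt > 0" and "dt * c_coef l n < 2"
    and "\<rho>0 \<in> carrier_mat (n+1) (n+1)"
  shows "\<exists>\<rho>inf \<in> carrier_mat (n+1) (n+1).
           P_low l n * \<rho>inf * P_low l n = \<rho>inf \<and>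
           (\<exists>C r. 0 \<le> r \<and> r < 1 \<and>
              (\<forall>p i j. i < n+1 \<longrightarrow> j < n+1 \<longrightarrow>
                 cmod (((euler1 l n dt ^^ p) \<rho>0 - \<rho>inf) $$ (i,j)) \<le> C * r ^ p))"
proof -
  interpret euler1_iteration l n dt \<rho>0
    using assms by unfold_locales auto
  have "converges_geometrically rate (entry (fst q) (snd q)) (limit $$ q)"
    if "q \<in> {..<n+1} \<times> {..<n+1}" for q
    using that entry_converges_to_limit by auto
  then obtain C where C: "\<forall>q \<in> {..<n+1} \<times> {..<n+1}. \<forall>p.
      cmod (entry (fst q) (snd q) p - limit $$ q) \<le> C * rate ^ p"
    using converges_geometrically_uniform[where x = "\<lambda>q. entry (fst q) (snd q)"
        and L = "\<lambda>q. limit $$ q" and S = "{..<n+1} \<times> {..<n+1}"] rate_bounds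
    by blast
  have "cmod (((euler1 l n dt ^^ p) \<rho>0 - limit) $$ (i,j)) \<le> C * rate ^ p"
    if "i < n+1" "j < n+1" for p i j
    using C that iterate_carrier[of p] limit_carrier by (auto simp: entry_def)
  then show ?thesis
    using limit_carrier P_low_limit rate_bounds by blast
qed

end
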